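(* Let $(V,q)$ be a Minkowski space and let $\|\cdot\|$ be an arbitrary norm on $V$. There exists a constant $M>0$ such that for all $x,y\in V$ there exists $z\in\mathcal{C}(x)\cap\mathcal{C}(y)$ with $\|z-x\|\le M\,\|y-x\|$.
   Context: A Minkowski space is a pair $(V,q)$ where $V$ is a finite-dimensional real vector space of dimension $n>1$ and $q$ is a quadratic form on $V$ of signature $(1,n-1)$. For $a\in V$, $\mathcal{C}(a)=\{m\in V: q(m-a)=0\}$. *)

theory Defs
  imports "HOL-Analysis.Analysis"
begin

text \<open>A finite-dimensional real vector space V is modelled by a type of class
  euclidean_space (its inner product plays no role below); its dimension is DIM('a).\<close>

definition quadratic_form :: "('a::real_vector \<Rightarrow> real) \<Rightarrow> bool" where
  "quadratic_form q \<longleftrightarrow> (\<exists>B. bilinear B \<and> (\<forall>x. q x = B x x))"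

text \<open>Signature (p,r) (Sylvester): in suitable linear coordinates f (a linear
  bijection onto the coordinate space) q is a sum of p squares minus r squares,
  with p + r = dim V (non-degenerate).\<close>

definition has_signature :: "('a::euclidean_space \<Rightarrow> real) \<Rightarrow> nat \<Rightarrow> nat \<Rightarrow> bool" where
  "has_signature q p r \<longleftrightarrow> p + r = DIM('a) \<and>
     (\<exists>f::'a \<Rightarrow> 'a. \<exists>P N. linear f \<and> bij f \<and> P \<inter> N = {} \<and> P \<union> N = Basis \<and>
        card P = p \<and> card N = r \<and>
        (\<forall>x. q x = (\<Sum>b\<in>P. (f x \<bullet> b)\<^sup>2) - (\<Sum>b\<in>N. (f x \<bullet> b)\<^sup>2)))"

definition minkowski_space :: "('a::euclidean_space \<Rightarrow> real) \<Rightarrow> bool" where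
  "minkowski_space q \<longleftrightarrow> DIM('a) > 1 \<and> quadratic_form q \<and> has_signature q 1 (DIM('a) - 1)"

definition light_cone :: "('a::real_vector \<Rightarrow> real) \<Rightarrow> 'a \<Rightarrow> 'a set" where
  "light_cone q a = {m. q (m - a) = 0}"

definition is_norm :: "('a::real_vector \<Rightarrow> real) \<Rightarrow> bool" where
  "is_norm N \<longleftrightarrow> (\<forall>x. 0 \<le> N x) \<and> (\<forall>x. N x = 0 \<longleftrightarrow> x = 0) \<and>
     (\<forall>c x. N (c *\<^sub>R x) = \<bar>c\<bar> * N x) \<and> (\<forall>x y. N (x + y) \<le> N x + N y)"

end

theory Submission
  imports Defs
begin

text \<open>In coordinates where q(w) = (w\<cdot>p)^2 - |w'|^2, with w' the component of w orthogonal
  to p, every vector a(p + d) with d a unit vector orthogonal to p is null, and moving along this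
  null line changes q(W - U) affinely in a. Choosing d so that the slope 2(U\<cdot>p - d\<cdot>U) has
  absolute value 2(|U\<cdot>p| + |U'|), which dominates |q U| = |(U\<cdot>p)^2 - |U'|^2|, yields a common
  null point W of the cones at 0 and U with |W| \<le> 2|U|. A linear change of coordinates and the
  equivalence of all norms on a finite-dimensional space turn this into the statement for q and
  an arbitrary norm.\<close>

lemma is_norm_sum:
  assumes "is_norm N" "finite S"
  shows "N (sum f S) \<le> (\<Sum>i\<in>S. N (f i))"
  using assms(2)
proof (induction S rule: finite_induct)
  case empty
  then show ?case using assms(1) unfolding is_norm_def by (metis order_refl sum.empty)
next
  case (insert x F)
  have "N (sum f (insert x F)) = N (f x + sum f F)" using insert by simp
  also have "\<dots> \<le> N (f x) + N (sum f F)" using assms(1) unfolding is_norm_def by blast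
  finally show ?case using insert by simp
qed

lemma is_norm_le_norm:
  fixes N :: "'a::euclidean_space \<Rightarrow> real"
  assumes "is_norm N"
  shows "\<exists>K>0. \<forall>x. N x \<le> K * norm x"
proof -
  define K where "K = 1 + (\<Sum>b\<in>(Basis::'a set). N b)"
  have N0: "\<And>x. 0 \<le> N x" using assms unfolding is_norm_def by blast
  have "K > 0" unfolding K_def using N0 by (smt (verit) sum_nonneg)
  moreover have "N x \<le> K * norm x" for x
  proof -
    have "N x = N (\<Sum>b\<in>Basis. (x \<bullet> b) *\<^sub>R b)" by (simp add: euclidean_representation)
    also have "\<dots> \<le> (\<Sum>b\<in>Basis. N ((x \<bullet> b) *\<^sub>R b))" by (rule is_norm_sum[OF assms]) simp
    also have "\<dots> = (\<Sum>b\<in>Basis. \<bar>x \<bullet> b\<bar> * N b)" using assms unfolding is_norm_def by simp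
    also have "\<dots> \<le> (\<Sum>b\<in>Basis. norm x * N b)"
      by (rule sum_mono) (simp add: Basis_le_norm N0 mult_right_mono)
    also have "\<dots> = norm x * (\<Sum>b\<in>Basis. N b)" by (simp add: sum_distrib_left)
    also have "\<dots> \<le> K * norm x" unfolding K_def by (simp add: algebra_simps)
    finally show ?thesis .
  qed
  ultimately show ?thesis by blast
qed

lemma is_norm_continuous_on:
  fixes N :: "'a::euclidean_space \<Rightarrow> real"
  assumes "is_norm N"
  shows "continuous_on S N"
proof -
  obtain K where K: "K > 0" "\<And>x. N x \<le> K * norm x" using is_norm_le_norm[OF assms] by blast
  have tri: "\<And>x y. N (x + y) \<le> N x + N y" and sc: "\<And>c x. N (c *\<^sub>R x) = \<bar>c\<bar> * N x"
    using assms unfolding is_norm_def by blast+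
  have "K-lipschitz_on UNIV N"
  proof (rule lipschitz_onI)
    fix x y :: 'a
    have "N x \<le> N y + N (x - y)" using tri[of y "x - y"] by simp
    moreover have "N y \<le> N x + N (x - y)" using tri[of x "y - x"] sc[of "-1" "y - x"] by simp
    ultimately show "dist (N x) (N y) \<le> K * dist x y"
      using K(2)[of "x - y"] by (simp add: dist_real_def dist_norm abs_le_iff)
  qed (use K in simp)
  then show ?thesis using lipschitz_on_continuous_on continuous_on_subset by blast
qed

lemma is_norm_ge_norm:
  fixes N :: "'a::euclidean_space \<Rightarrow> real"
  assumes "is_norm N"
  shows "\<exists>k>0. \<forall>x. k * norm x \<le> N x"
proof -
  have sc: "\<And>c x. N (c *\<^sub>R x) = \<bar>c\<bar> * N x" and z: "\<And>x. N x = 0 \<longleftrightarrow> x = 0"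
    and N0: "\<And>x. 0 \<le> N x"
    using assms unfolding is_norm_def by blast+
  have "sphere (0::'a) 1 \<noteq> {}"
    using norm_some_Basis by (metis mem_sphere_0 empty_iff)
  then obtain x0 where x0: "x0 \<in> sphere 0 1" "\<And>y. y \<in> sphere 0 1 \<Longrightarrow> N x0 \<le> N y"
    using continuous_attains_inf[OF compact_sphere _ is_norm_continuous_on[OF assms]] by blast
  have "N x0 > 0" using x0(1) z N0 by (metis less_eq_real_def mem_sphere_0 norm_zero zero_neq_one)
  moreover have "N x0 * norm x \<le> N x" for x
  proof (cases "x = 0")
    case True then show ?thesis using N0 by simp
  next
    case False
    then have "N x0 \<le> N (sgn x)" by (intro x0(2)) (simp add: norm_sgn)
    also have "N (sgn x) = N x / norm x"
      using sc[of "inverse (norm x)" x] by (simp add: sgn_div_norm divide_inverse_commute)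
    finally show ?thesis using False by (simp add: field_simps)
  qed
  ultimately show ?thesis by blast
qed

definition lorentz_form :: "'a::euclidean_space \<Rightarrow> 'a \<Rightarrow> real" where
  "lorentz_form p w = 2 * (w \<bullet> p)\<^sup>2 - w \<bullet> w"

lemma minkowski_space_standard_form:
  fixes q :: "'a::euclidean_space \<Rightarrow> real"
  assumes "minkowski_space q"
  obtains f :: "'a \<Rightarrow> 'a" and p where "linear f" "bij f" "p \<in> Basis" "\<And>x. q x = lorentz_form p (f x)"
proof -
  obtain f :: "'a \<Rightarrow> 'a" and P N where f: "linear f" "bij f"
    and PN: "P \<inter> N = {}" "P \<union> N = Basis" "card P = 1"
    and qf: "\<And>x. q x = (\<Sum>b\<in>P. (f x \<bullet> b)\<^sup>2) - (\<Sum>b\<in>N. (f x \<bullet> b)\<^sup>2)"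
    using assms unfolding minkowski_space_def has_signature_def by blast
  obtain p where P: "P = {p}" using PN(3) card_1_singletonE by blast
  have p: "p \<in> Basis" and N: "N = Basis - {p}" using PN P by blast+
  have "q x = lorentz_form p (f x)" for x
  proof -
    have "f x \<bullet> f x = (\<Sum>b\<in>Basis. (f x \<bullet> b)\<^sup>2)"
      by (subst euclidean_inner) (simp add: power2_eq_square)
    also have "\<dots> = (f x \<bullet> p)\<^sup>2 + (\<Sum>b\<in>Basis - {p}. (f x \<bullet> b)\<^sup>2)"
      using p by (simp add: sum.remove)
    finally show ?thesis using qf[of x] P N by (simp add: lorentz_form_def)
  qed
  then show ?thesis by (rule that[OF f p])
qed

lemma lorentz_form_null_line:
  fixes p d U :: "'a::euclidean_space"
  assumes "p \<in> Basis" "d \<bullet> p = 0" "d \<bullet> d = 1"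
  shows "lorentz_form p (a *\<^sub>R (p + d)) = 0"
    and "lorentz_form p (a *\<^sub>R (p + d) - U) = lorentz_form p U - 2 * a * (U \<bullet> p - d \<bullet> U)"
proof -
  define W where "W = a *\<^sub>R (p + d)"
  have pp: "p \<bullet> p = 1" using assms(1) by simp
  have Wp: "W \<bullet> p = a"
    using assms(2) pp by (simp add: W_def inner_add_left)
  have WW: "W \<bullet> W = 2 * a\<^sup>2"
    using assms(2,3) pp by (simp add: W_def inner_add_left inner_add_right inner_commute power2_eq_square)
  have WU: "U \<bullet> W = a * (U \<bullet> p + d \<bullet> U)"
    by (simp add: W_def inner_add_right inner_commute)
  show "lorentz_form p (a *\<^sub>R (p + d)) = 0"
    unfolding W_def[symmetric] lorentz_form_def Wp WW by simp
  show "lorentz_form p (a *\<^sub>R (p + d) - U) = lorentz_form p U - 2 * a * (U \<bullet> p - d \<bullet> U)"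
    unfolding W_def[symmetric] lorentz_form_def inner_diff_left inner_diff_right Wp WW WU
    by (simp add: inner_commute[of W U] WU power2_eq_square algebra_simps)
qed

text \<open>d points along the component of U orthogonal to p, with sign opposite to that of U\<cdot>p
  (any other basis vector if U is parallel to p).\<close>

lemma exists_unit_orthogonal_opposing:
  fixes p U :: "'a::euclidean_space"
  assumes p: "p \<in> Basis" and dim: "DIM('a) > 1"
  shows "\<exists>d. d \<bullet> p = 0 \<and> d \<bullet> d = 1 \<and>
    \<bar>U \<bullet> p - d \<bullet> U\<bar> = \<bar>U \<bullet> p\<bar> + norm (U - (U \<bullet> p) *\<^sub>R p)"
proof -
  define u' where "u' = U - (U \<bullet> p) *\<^sub>R p"
  define \<sigma> :: real where "\<sigma> = (if U \<bullet> p \<ge> 0 then 1 else -1)"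
  have u'p: "u' \<bullet> p = 0" using p unfolding u'_def by (simp add: inner_diff_left)
  have u'U: "u' \<bullet> U = (norm u')\<^sup>2"
    using u'p unfolding power2_norm_eq_inner by (simp add: u'_def inner_diff_left inner_diff_right
        inner_commute)
  obtain d where d: "d \<bullet> p = 0" "d \<bullet> d = 1" "d \<bullet> U = - \<sigma> * norm u'"
  proof (cases "u' = 0")
    case True
    have "\<not> (Basis :: 'a set) \<subseteq> {p}"
      using dim card_mono[of "{p}" "Basis :: 'a set"] by auto
    then obtain e where e: "e \<in> Basis" "e \<noteq> p" by blast
    have "U = (U \<bullet> p) *\<^sub>R p" using True unfolding u'_def by simp
    then have "e \<bullet> U = (U \<bullet> p) * (e \<bullet> p)" by (metis inner_scaleR_right)
    then show ?thesis using that[of e] e p True by (simp add: inner_not_same_Basis)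
  next
    case False
    have \<sigma>2: "\<sigma> * \<sigma> = 1" by (simp add: \<sigma>_def)
    have "u' \<bullet> u' = norm u' * norm u'" by (metis power2_eq_square power2_norm_eq_inner)
    then have dd: "((- \<sigma> / norm u') *\<^sub>R u') \<bullet> ((- \<sigma> / norm u') *\<^sub>R u') = 1"
      using False \<sigma>2 by simp
    have dU: "((- \<sigma> / norm u') *\<^sub>R u') \<bullet> U = - \<sigma> * norm u'"
      using u'U False by (simp add: power2_eq_square)
    show ?thesis by (rule that[OF _ dd dU]) (simp add: u'p)
  qed
  have "\<bar>U \<bullet> p - d \<bullet> U\<bar> = \<bar>U \<bullet> p\<bar> + norm u'"
    using d(3) norm_ge_zero[of u'] unfolding \<sigma>_def by (auto simp: abs_if simp del: norm_ge_zero)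
  then show ?thesis using d u'_def by blast
qed

lemma lorentz_form_orthogonal_split:
  fixes p U :: "'a::euclidean_space"
  assumes "p \<in> Basis"
  shows "lorentz_form p U = (U \<bullet> p)\<^sup>2 - (norm (U - (U \<bullet> p) *\<^sub>R p))\<^sup>2"
    and "(norm U)\<^sup>2 = (U \<bullet> p)\<^sup>2 + (norm (U - (U \<bullet> p) *\<^sub>R p))\<^sup>2"
proof -
  have "(norm (U - (U \<bullet> p) *\<^sub>R p))\<^sup>2 = U \<bullet> U - (U \<bullet> p)\<^sup>2"
    using assms unfolding power2_norm_eq_inner
    by (simp add: inner_diff_left inner_diff_right inner_commute power2_eq_square)
  then show "lorentz_form p U = (U \<bullet> p)\<^sup>2 - (norm (U - (U \<bullet> p) *\<^sub>R p))\<^sup>2"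
    and "(norm U)\<^sup>2 = (U \<bullet> p)\<^sup>2 + (norm (U - (U \<bullet> p) *\<^sub>R p))\<^sup>2"
    by (simp_all add: lorentz_form_def power2_norm_eq_inner)
qed

lemma exists_common_null_point:
  fixes p U :: "'a::euclidean_space"
  assumes p: "p \<in> Basis" and dim: "DIM('a) > 1"
  shows "\<exists>W. lorentz_form p W = 0 \<and> lorentz_form p (W - U) = 0 \<and> norm W \<le> 2 * norm U"
proof -
  define u0 where "u0 = U \<bullet> p"
  define r where "r = norm (U - u0 *\<^sub>R p)"
  obtain d where d: "d \<bullet> p = 0" "d \<bullet> d = 1" and slope: "\<bar>u0 - d \<bullet> U\<bar> = \<bar>u0\<bar> + r"
    using exists_unit_orthogonal_opposing[OF p dim, of U] unfolding u0_def r_def by blast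
  have Q: "lorentz_form p U = u0\<^sup>2 - r\<^sup>2" and nU: "(norm U)\<^sup>2 = u0\<^sup>2 + r\<^sup>2"
    using lorentz_form_orthogonal_split[OF p] unfolding u0_def r_def by blast+
  define a where "a = lorentz_form p U / (2 * (u0 - d \<bullet> U))"
  define W where "W = a *\<^sub>R (p + d)"
  have r0: "r \<ge> 0" unfolding r_def by simp
  have slope_a: "lorentz_form p U = 2 * a * (u0 - d \<bullet> U)"
  proof (cases "u0 - d \<bullet> U = 0")
    case True
    then have "u0 = 0" "r = 0" using slope r0 by linarith+
    then show ?thesis using Q True by simp
  qed (simp add: a_def field_simps)
  have Q_bound: "\<bar>lorentz_form p U\<bar> \<le> (\<bar>u0\<bar> + r)\<^sup>2"
    unfolding Q power2_sum using r0 by (simp add: abs_le_iff)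
  have "2 * \<bar>a\<bar> \<le> \<bar>u0\<bar> + r"
  proof (cases "\<bar>u0\<bar> + r = 0")
    case True
    then show ?thesis using slope by (simp add: a_def)
  next
    case False
    then have pos: "\<bar>u0\<bar> + r > 0" using r0 by linarith
    have "(2 * \<bar>a\<bar>) * (\<bar>u0\<bar> + r) = \<bar>lorentz_form p U\<bar>"
      using slope slope_a by (simp add: abs_mult)
    also have "\<dots> \<le> (\<bar>u0\<bar> + r) * (\<bar>u0\<bar> + r)" using Q_bound by (simp add: power2_eq_square)
    finally show ?thesis using pos by simp
  qed
  then have "\<bar>a\<bar> * 2 \<le> 2 * norm U"
    using power2_le_imp_le[of "\<bar>u0\<bar>" "norm U"] power2_le_imp_le[of r "norm U"] nU by simp
  moreover have "norm (p + d) \<le> 2"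
    using norm_triangle_ineq[of p d] p d(2) by (simp add: norm_eq_sqrt_inner)
  ultimately have "norm W \<le> 2 * norm U"
    unfolding W_def using mult_left_mono[of "norm (p + d)" 2 "\<bar>a\<bar>"] by simp
  then show ?thesis
    using lorentz_form_null_line[OF p d, where a=a] slope_a by (auto simp: W_def u0_def)
qed

lemma light_cones_meet_near:
  fixes q :: "'a::euclidean_space \<Rightarrow> real"
  assumes "minkowski_space q"
  shows "\<exists>C>0. \<forall>x y. \<exists>z. z \<in> light_cone q x \<inter> light_cone q y \<and> norm (z - x) \<le> C * norm (y - x)"
proof -
  have dim: "DIM('a) > 1" using assms unfolding minkowski_space_def by simp
  obtain f :: "'a \<Rightarrow> 'a" and p where f: "linear f" "bij f" and p: "p \<in> Basis" and qf: "\<And>x. q x = lorentz_form p (f x)"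
    using minkowski_space_standard_form[OF assms] by metis
  obtain g where g: "linear g" "g \<circ> f = id"
    using linear_injective_left_inverse[OF f(1)] f(2) bij_is_inj by blast
  have fg: "f (g w) = w" for w
    using g(2) f(2) by (metis bij_pointE comp_apply id_apply)
  obtain Bf where Bf: "Bf > 0" "\<And>x. norm (f x) \<le> Bf * norm x" using linear_bounded_pos[OF f(1)] by blast
  obtain Bg where Bg: "Bg > 0" "\<And>x. norm (g x) \<le> Bg * norm x" using linear_bounded_pos[OF g(1)] by blast
  have "\<exists>z. z \<in> light_cone q x \<inter> light_cone q y \<and> norm (z - x) \<le> (2 * Bg * Bf) * norm (y - x)" for x y
  proof -
    obtain W where W: "lorentz_form p W = 0" "lorentz_form p (W - f (y - x)) = 0"
      "norm W \<le> 2 * norm (f (y - x))"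
      using exists_common_null_point[OF p dim] by blast
    have "f (x + g W - y) = f (g W - (y - x))" by (simp add: algebra_simps)
    also have "\<dots> = W - f (y - x)" by (simp only: linear_diff[OF f(1)] fg)
    finally have "f (x + g W - y) = W - f (y - x)" .
    moreover have "norm (g W) \<le> (2 * Bg * Bf) * norm (y - x)"
    proof -
      have "norm (g W) \<le> Bg * norm W" by (rule Bg(2))
      also have "\<dots> \<le> Bg * (2 * (Bf * norm (y - x)))"
        using W(3) Bf(2)[of "y - x"] Bg(1) by (intro mult_left_mono) simp_all
      finally show ?thesis by (simp add: algebra_simps)
    qed
    ultimately show ?thesis
      using W fg[of W] by (intro exI[of _ "x + g W"]) (simp add: light_cone_def qf)
  qed
  then show ?thesis using Bf Bg by (intro exI[of _ "2 * Bg * Bf"]) simp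
qed

theorem lemma2p3:
  fixes q :: "'a::euclidean_space \<Rightarrow> real" and nrm :: "'a \<Rightarrow> real"
  assumes "minkowski_space q" and "is_norm nrm"
  shows "\<exists>M>0. \<forall>x y. \<exists>z. z \<in> light_cone q x \<inter> light_cone q y \<and> nrm (z - x) \<le> M * nrm (y - x)"
proof -
  obtain C where C: "C > 0" "\<And>x y. \<exists>z. z \<in> light_cone q x \<inter> light_cone q y \<and> norm (z - x) \<le> C * norm (y - x)"
    using light_cones_meet_near[OF assms(1)] by blast
  obtain K where K: "K > 0" "\<And>x. nrm x \<le> K * norm x" using is_norm_le_norm[OF assms(2)] by blast
  obtain k where k: "k > 0" "\<And>x. k * norm x \<le> nrm x" using is_norm_ge_norm[OF assms(2)] by blast
  have "\<exists>z. z \<in> light_cone q x \<inter> light_cone q y \<and> nrm (z - x) \<le> (K * C / k) * nrm (y - x)" for x y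
  proof -
    obtain z where z: "z \<in> light_cone q x \<inter> light_cone q y" "norm (z - x) \<le> C * norm (y - x)"
      using C(2) by blast
    have "norm (y - x) \<le> nrm (y - x) / k"
      using k by (simp add: field_simps mult.commute)
    then have "norm (z - x) \<le> C * (nrm (y - x) / k)"
      using z(2) C(1) by (meson mult_left_mono less_imp_le order_trans)
    then have "nrm (z - x) \<le> K * (C * (nrm (y - x) / k))"
      using K by (meson mult_left_mono less_imp_le order_trans)
    then show ?thesis using z(1) by (auto simp: field_simps)
  qed
  then show ?thesis using C K k by (intro exI[of _ "K * C / k"]) simp
qed

end
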